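(* Let $p$ be a prime, $n$ a positive integer, and for $j=0,\dots,p-1$ let $f_j:\mathbb{F}_p^n\to\mathbb{F}_p$ be functions. Define $F:\mathbb{F}_p^{n+2}=\mathbb{F}_p^n\times\mathbb{F}_p\times\mathbb{F}_p\to\mathbb{F}_p$ by \[F(x,x_{n+1},y)=f_y(x)+x_{n+1}y,\] where $f_y$ denotes $f_j$ for $j$ the element $y\in\mathbb{F}_p=\{0,\dots,p-1\}$. Then $F$ is bent if and only if $f_j$ is bent for every $0\le j\le p-1$.
   Context: On $\mathbb{F}_p^N$ use the standard dot product. Walsh transform: $\widehat f(b)=\sum_{x\in\mathbb{F}_p^N}\epsilon_p^{f(x)-b\cdot x}$, $\epsilon_p=e^{2\pi i/p}$; $f$ is bent if $|\widehat f(b)|=p^{N/2}$ for all $b\in\mathbb{F}_p^N$. *)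

theory Defs
  imports Complex_Main "HOL-Computational_Algebra.Primes"
begin

text \<open>F_p^N is represented by integer vectors \<open>nat \<Rightarrow> int\<close> whose first N
  components lie in {0..p-1} and whose other components are 0.\<close>
definition vecs :: "nat \<Rightarrow> nat \<Rightarrow> (nat \<Rightarrow> int) set" where
  "vecs p N = {x. (\<forall>i<N. 0 \<le> x i \<and> x i < int p) \<and> (\<forall>i\<ge>N. x i = 0)}"

definition dotp :: "nat \<Rightarrow> (nat \<Rightarrow> int) \<Rightarrow> (nat \<Rightarrow> int) \<Rightarrow> int" where
  "dotp N b x = (\<Sum>i<N. b i * x i)"

definition epsp :: "nat \<Rightarrow> int \<Rightarrow> complex" where
  "epsp p k = exp (2 * of_real pi * \<i> * of_int k / of_nat p)"

definition walsh :: "nat \<Rightarrow> nat \<Rightarrow> ((nat \<Rightarrow> int) \<Rightarrow> int) \<Rightarrow> (nat \<Rightarrow> int) \<Rightarrow> complex" where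
  "walsh p N f b = (\<Sum>x\<in>vecs p N. epsp p (f x - dotp N b x))"

definition bent :: "nat \<Rightarrow> nat \<Rightarrow> ((nat \<Rightarrow> int) \<Rightarrow> int) \<Rightarrow> bool" where
  "bent p N f \<longleftrightarrow> (\<forall>b\<in>vecs p N. cmod (walsh p N f b) = sqrt (real p) ^ N)"

definition fp_fun :: "nat \<Rightarrow> nat \<Rightarrow> ((nat \<Rightarrow> int) \<Rightarrow> int) \<Rightarrow> bool" where
  "fp_fun p N f \<longleftrightarrow> (\<forall>x\<in>vecs p N. 0 \<le> f x \<and> f x < int p)"

text \<open>F(x, x_{n+1}, y) = f_y(x) + x_{n+1} y (mod p), where for z in F_p^{n+2},
  x = first n coordinates (indices 0..n-1), x_{n+1} = z n, y = z (n+1).\<close>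
definition concatF :: "nat \<Rightarrow> nat \<Rightarrow> (nat \<Rightarrow> (nat \<Rightarrow> int) \<Rightarrow> int) \<Rightarrow> (nat \<Rightarrow> int) \<Rightarrow> int" where
  "concatF p n f z = (f (nat (z (Suc n))) (\<lambda>i. if i < n then z i else 0) + z n * z (Suc n)) mod int p"

end

theory Submission
  imports Defs "HOL-Analysis.Complex_Transcendental"
begin

text \<open>Write a point of \<open>\<bbbF>\<^sub>p\<^sup>n\<^sup>+\<^sup>2\<close> as \<open>(x, a, y)\<close> and a frequency as \<open>(b, j, d)\<close>.
  The term of the Walsh sum of \<open>F\<close> at \<open>(x, a, y)\<close> is \<open>\<epsilon>\<close> raised to
  \<open>f_y(x) - b\<cdot>x - d y + a (y - j)\<close>, so summing over \<open>a\<close> first kills every \<open>y \<noteq> j\<close>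
  by orthogonality of the characters \<open>a \<mapsto> \<epsilon>^(a t)\<close>. Hence
  \<open>walsh F (b, j, d) = p \<epsilon>^(-d j) walsh f_j b\<close>: the Walsh spectrum of \<open>F\<close> is that of the
  \<open>f_j\<close> scaled by \<open>p\<close>, which is exactly the gap between \<open>p^((n+2)/2)\<close> and \<open>p^(n/2)\<close>.\<close>

lemma epsp_add: "epsp p (a + b) = epsp p a * epsp p b"
  unfolding epsp_def by (simp add: exp_add[symmetric] ring_distribs add_divide_distrib)

lemma norm_epsp [simp]: "norm (epsp p k) = 1"
proof -
  have "epsp p k = exp (\<i> * of_real (2 * pi * k / p))"
    unfolding epsp_def by (simp add: field_simps)
  then show ?thesis by simp
qed

lemma epsp_eq_1_iff:
  assumes "p > 0"
  shows "epsp p t = 1 \<longleftrightarrow> int p dvd t"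
proof
  assume "epsp p t = 1"
  then obtain m :: int where "Im (2 * of_real pi * \<i> * of_int t / of_nat p) = of_int (2 * m) * pi"
    unfolding epsp_def exp_eq_1 by blast
  then have "real_of_int t = real p * m"
    using assms pi_gt_zero by (simp add: Im_divide power2_eq_square field_simps)
  then have "t = int p * m" by (metis of_int_eq_iff of_int_mult of_int_of_nat_eq)
  then show "int p dvd t" by simp
next
  assume "int p dvd t"
  then obtain m where "t = int p * m" by blast
  then have "epsp p t = exp ((2 * of_int m * pi) * \<i>)"
    unfolding epsp_def using assms by (simp add: field_simps)
  also have "\<dots> = 1" by (rule exp_integer_2pi) simp
  finally show "epsp p t = 1" .
qed

lemma epsp_mod_diff:
  assumes "p > 0"
  shows "epsp p (k mod int p - m) = epsp p (k - m)"
proof -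
  have "k - m = (k mod int p - m) + int p * (k div int p)" by simp
  then have "epsp p (k - m) = epsp p (k mod int p - m) * epsp p (int p * (k div int p))"
    by (metis epsp_add)
  then show ?thesis using assms by (simp add: epsp_eq_1_iff)
qed

lemma epsp_of_nat_mult: "epsp p (int a * t) = epsp p t ^ a"
  unfolding epsp_def by (simp add: exp_of_nat_mult[symmetric] field_simps)

lemma sum_epsp_mult:
  assumes "p > 0"
  shows "(\<Sum>a<p. epsp p (int a * t)) = (if int p dvd t then of_nat p else 0)"
proof (cases "int p dvd t")
  case True
  then have "epsp p (int a * t) = 1" for a using assms by (simp add: epsp_eq_1_iff)
  with True show ?thesis by simp
next
  case False
  have "epsp p t ^ p = 1"
    using assms by (simp add: epsp_of_nat_mult[symmetric] epsp_eq_1_iff)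
  moreover have "epsp p t \<noteq> 1" using False assms by (simp add: epsp_eq_1_iff)
  ultimately show ?thesis using False by (simp add: epsp_of_nat_mult sum_gp_strict)
qed

lemma int_dvd_diff_less_iff:
  assumes "y < p" "j < p"
  shows "int p dvd int y - int j \<longleftrightarrow> y = j"
  using assms dvd_imp_le_int[of "int y - int j" "int p"] by (cases "y = j") (simp_all, linarith)

lemma inj_on_vecs_upd: "inj_on (\<lambda>(x, a). x(N := int a)) (vecs p N \<times> UNIV)"
proof (rule inj_onI, clarify)
  fix x x' :: "nat \<Rightarrow> int" and a a' :: nat
  assume x: "x \<in> vecs p N" "x' \<in> vecs p N" and eq: "x(N := int a) = x'(N := int a')"
  have "x i = x' i" for i
    using fun_cong[OF eq, of i] x by (cases "i = N") (auto simp: vecs_def)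
  moreover have "a = a'" using fun_cong[OF eq, of N] by simp
  ultimately show "x = x' \<and> a = a'" by blast
qed

lemma vecs_Suc: "vecs p (Suc N) = (\<lambda>(x, a). x(N := int a)) ` (vecs p N \<times> {..<p})"
proof (intro equalityI subsetI)
  fix z assume z: "z \<in> vecs p (Suc N)"
  then show "z \<in> (\<lambda>(x, a). x(N := int a)) ` (vecs p N \<times> {..<p})"
    by (intro image_eqI[where x = "(z(N := 0), nat (z N))"]) (auto simp: vecs_def)
qed (auto simp: vecs_def)

lemma sum_vecs_Suc:
  "(\<Sum>z\<in>vecs p (Suc N). g z) = (\<Sum>x\<in>vecs p N. \<Sum>a<p. g (x(N := int a)))"
proof -
  have "inj_on (\<lambda>(x, a). x(N := int a)) (vecs p N \<times> {..<p})"
    using inj_on_vecs_upd by (rule inj_on_subset) blast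
  then have "(\<Sum>z\<in>vecs p (Suc N). g z) = (\<Sum>w\<in>vecs p N \<times> {..<p}. g (case w of (x, a) \<Rightarrow> x(N := int a)))"
    unfolding vecs_Suc by (rule sum.reindex[unfolded comp_def])
  then show ?thesis by (simp add: sum.cartesian_product prod.case_distrib)
qed

lemma ball_vecs_Suc:
  "(\<forall>z\<in>vecs p (Suc N). P z) \<longleftrightarrow> (\<forall>x\<in>vecs p N. \<forall>a<p. P (x(N := int a)))"
  by (auto simp: vecs_Suc)

lemma dotp_Suc_upd: "dotp (Suc N) (b(N := c)) (x(N := a)) = dotp N b x + c * a"
  unfolding dotp_def by (auto intro: sum.cong)

lemma concatF_upd:
  assumes "x \<in> vecs p n"
  shows "concatF p n f (x(n := int a, Suc n := int y)) = (f y x + int a * int y) mod int p"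
proof -
  have "(\<lambda>i. if i < n then (x(n := int a, Suc n := int y)) i else 0) = x"
    using assms by (auto simp: vecs_def)
  then show ?thesis by (simp add: concatF_def)
qed

lemma walsh_concatF:
  assumes "p > 0" "j < p"
  shows "walsh p (n + 2) (concatF p n f) (b(n := int j, Suc n := d))
    = of_nat p * epsp p (- d * int j) * walsh p n (f j) b"
proof -
  define E where "E x y = epsp p (f y x - dotp n b x - d * int y)" for x y
  have "walsh p (n + 2) (concatF p n f) (b(n := int j, Suc n := d))
      = (\<Sum>x\<in>vecs p n. \<Sum>a<p. \<Sum>y<p. E x y * epsp p (int a * (int y - int j)))"
  proof -
    have "epsp p (concatF p n f (x(n := int a, Suc n := int y))
          - dotp (Suc (Suc n)) (b(n := int j, Suc n := d)) (x(n := int a, Suc n := int y)))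
        = E x y * epsp p (int a * (int y - int j))" if "x \<in> vecs p n" for x a y
    proof -
      have "f y x + int a * int y - (dotp n b x + int j * int a + d * int y)
          = (f y x - dotp n b x - d * int y) + int a * (int y - int j)"
        by (simp add: right_diff_distrib)
      then have "epsp p ((f y x + int a * int y) mod int p - (dotp n b x + int j * int a + d * int y))
          = epsp p ((f y x - dotp n b x - d * int y) + int a * (int y - int j))"
        by (simp only: epsp_mod_diff[OF assms(1)])
      then show ?thesis
        using that by (simp add: concatF_upd dotp_Suc_upd E_def epsp_add)
    qed
    then show ?thesis
      by (simp add: walsh_def numeral_2_eq_2 sum_vecs_Suc)
  qed
  also have "\<dots> = (\<Sum>x\<in>vecs p n. \<Sum>y<p. E x y * (\<Sum>a<p. epsp p (int a * (int y - int j))))"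
    unfolding sum_distrib_left by (rule sum.cong[OF refl], rule sum.swap)
  also have "\<dots> = (\<Sum>x\<in>vecs p n. E x j * of_nat p)"
    using assms by (simp add: sum_epsp_mult int_dvd_diff_less_iff if_distrib cong: if_cong)
  also have "\<dots> = of_nat p * epsp p (- d * int j) * walsh p n (f j) b"
    by (simp add: walsh_def E_def sum_distrib_left epsp_add[symmetric] algebra_simps)
  finally show ?thesis .
qed

lemma norm_walsh_concatF:
  assumes "p > 0" "j < p"
  shows "norm (walsh p (n + 2) (concatF p n f) (b(n := int j, Suc n := d)))
    = real p * norm (walsh p n (f j) b)"
  unfolding walsh_concatF[OF assms] norm_mult norm_epsp norm_of_nat by simp

theorem proposition1:
  fixes p n :: nat and f :: "nat \<Rightarrow> (nat \<Rightarrow> int) \<Rightarrow> int"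
  assumes "prime p" and "n > 0"
    and "\<forall>j<p. fp_fun p n (f j)"
  shows "bent p (n + 2) (concatF p n f) \<longleftrightarrow> (\<forall>j<p. bent p n (f j))"
proof -
  have p: "p > 0" using \<open>prime p\<close> prime_gt_0_nat by blast
  have ball_vecs_n2: "(\<forall>z\<in>vecs p (n + 2). P z)
      \<longleftrightarrow> (\<forall>b\<in>vecs p n. \<forall>j<p. \<forall>d<p. P (b(n := int j, Suc n := int d)))" for P
    by (simp only: numeral_2_eq_2 add_Suc_right add_0_right ball_vecs_Suc)
  have sqrt_pow: "sqrt (real p) ^ (n + 2) = real p * sqrt (real p) ^ n" by (simp add: power_add)
  have norm_iff: "norm (walsh p (n + 2) (concatF p n f) (b(n := int j, Suc n := d))) = sqrt (real p) ^ (n + 2)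
      \<longleftrightarrow> norm (walsh p n (f j) b) = sqrt (real p) ^ n" if "j < p" for j b d
    unfolding norm_walsh_concatF[OF p that] sqrt_pow using p by simp
  have "bent p (n + 2) (concatF p n f)
      \<longleftrightarrow> (\<forall>b\<in>vecs p n. \<forall>j<p. \<forall>d<p. norm (walsh p n (f j) b) = sqrt (real p) ^ n)"
    unfolding bent_def ball_vecs_n2 using norm_iff by blast
  also have "\<dots> \<longleftrightarrow> (\<forall>j<p. bent p n (f j))"
    using p by (auto simp: bent_def)
  finally show ?thesis .
qed

end
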